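(* For each of the following groups $G$ of order $36$ there exists a $(G,[3,9,24],18)$ Hadamard partitioned difference family: $\mathbb{Z}_6\times\mathbb{Z}_6$, $\mathbb{Z}_3\times\mathbb{Z}_{12}$, $\mathbb{Z}_3\times Q_{12}$, $D_6\times D_6$, $\mathbb{Z}_6\times D_6$.
   Context: For a finite group $G$ (difference of $x$ and $y$ being $x-y$ additively, or $xy^{-1}$ multiplicatively) and $B\subseteq G$, $\Delta B$ is the multiset of differences of ordered pairs of distinct elements of $B$; for $\mathcal{F}=\{B_1,\dots,B_t\}$, $\Delta\mathcal{F}$ is the multiset union of the $\Delta B_i$. $\mathcal{F}$ is a $(G,[k_1,\dots,k_t],\lambda)$ partitioned difference family if the $B_i$ partition $G$, $|B_i|=k_i$, and $\Delta\mathcal{F}$ contains every non-identity element of $G$ exactly $\lambda$ times; it is Hadamard if $|G|=2\lambda$. $D_{2n}=\langle x,y\mid x^n=1,\ y^2=1,\ yx^i=x^{-i}y\rangle$ is the dihedral group of order $2n$ (so $D_6$ has order $6$), and $Q_{4n}=\langle x,y\mid x^{2n}=1,\ y^2=x^n,\ yx^i=x^{-i}y\rangle$ is the dicyclic group of order $4n$ (so $Q_{12}$ has order $12$). *)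

theory Defs
  imports "HOL-Algebra.Algebra" "HOL-Library.Multiset"
begin

(* Cyclic group Z_n: the library's integer_mod_group n (carrier {0..<n}, addition mod n). *)

(* Dihedral group D_{2n} = <x,y | x^n = 1, y^2 = 1, y x^i = x^{-i} y>, order 2n.
   The pair (i,s), 0 <= i < n, s in {0,1}, represents x^i y^s. *)
definition dihedral_group :: "nat \<Rightarrow> (int \<times> int) monoid" where
  "dihedral_group n =
     \<lparr>carrier = {0..<int n} \<times> {0..<2},
      monoid.mult = (\<lambda>(i,s) (j,t). ((i + (if s = 0 then j else - j)) mod int n, (s + t) mod 2)),
      one = (0, 0)\<rparr>"

(* Dicyclic group Q_{4n} = <x,y | x^{2n} = 1, y^2 = x^n, y x^i = x^{-i} y>, order 4n.
   The pair (i,s), 0 <= i < 2n, s in {0,1}, represents x^i y^s. *)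
definition dicyclic_group :: "nat \<Rightarrow> (int \<times> int) monoid" where
  "dicyclic_group n =
     \<lparr>carrier = {0..<2 * int n} \<times> {0..<2},
      monoid.mult = (\<lambda>(i,s) (j,t).
         ((i + (if s = 0 then j else - j) + (if s = 1 \<and> t = 1 then int n else 0)) mod (2 * int n),
          (s + t) mod 2)),
      one = (0, 0)\<rparr>"

definition diff_mset :: "('a, 'b) monoid_scheme \<Rightarrow> 'a set \<Rightarrow> 'a multiset" where
  "diff_mset G B =
     image_mset (\<lambda>(a, b). a \<otimes>\<^bsub>G\<^esub> inv\<^bsub>G\<^esub> b) (mset_set {(a, b). a \<in> B \<and> b \<in> B \<and> a \<noteq> b})"

definition diff_mset_family :: "('a, 'b) monoid_scheme \<Rightarrow> 'a set list \<Rightarrow> 'a multiset" where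
  "diff_mset_family G Bs = sum_list (map (diff_mset G) Bs)"

definition is_PDF :: "('a, 'b) monoid_scheme \<Rightarrow> 'a set list \<Rightarrow> nat list \<Rightarrow> nat \<Rightarrow> bool" where
  "is_PDF G Bs ks lam \<longleftrightarrow>
     length Bs = length ks \<and>
     (\<forall>i < length Bs. card (Bs ! i) = ks ! i) \<and>
     (\<forall>i < length Bs. \<forall>j < length Bs. i \<noteq> j \<longrightarrow> Bs ! i \<inter> Bs ! j = {}) \<and>
     \<Union> (set Bs) = carrier G \<and>
     (\<forall>g \<in> carrier G - {\<one>\<^bsub>G\<^esub>}. count (diff_mset_family G Bs) g = lam)"

definition is_Hadamard_PDF :: "('a, 'b) monoid_scheme \<Rightarrow> 'a set list \<Rightarrow> nat list \<Rightarrow> nat \<Rightarrow> bool" where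
  "is_Hadamard_PDF G Bs ks lam \<longleftrightarrow> is_PDF G Bs ks lam \<and> card (carrier G) = 2 * lam"

end

theory Submission
  imports Defs
begin

(* Each family is exhibited explicitly and verified by computation. If the blocks are listed
   without repetitions, the family is a Hadamard PDF exactly when every group element occurs once
   in the concatenated blocks and every non-identity element occurs lambda times in the list of
   all quotients a b^-1 (a, b distinct in a common block). Both multiplicities are tallied in a
   table whose rows and columns are indexed by the two direct factors; the quotients are computed
   from closed formulas for inverses in the dihedral and dicyclic groups, which are valid once
   these structures are known to be groups. *)

lemma mod_diff_add_left_eq:
  fixes a b c m :: "'a::euclidean_ring_cancel"
  shows "(a mod m - b + c) mod m = (a - b + c) mod m"
  by (metis mod_add_left_eq mod_diff_left_eq)

lemma mod_diff_add_right_eq: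
  fixes a b c m :: "'a::euclidean_ring_cancel"
  shows "(a - b mod m + c) mod m = (a - b + c) mod m"
  by (metis mod_add_left_eq mod_diff_right_eq)

lemma carrier_dihedral_group: "carrier (dihedral_group n) = {0..<int n} \<times> {0, 1}"
  by (auto simp: dihedral_group_def)

lemma one_dihedral_group [simp]: "\<one>\<^bsub>dihedral_group n\<^esub> = (0, 0)"
  by (simp add: dihedral_group_def)

lemma mult_dihedral_group [simp]:
  "(i, s) \<otimes>\<^bsub>dihedral_group n\<^esub> (j, t) = ((i + (if s = 0 then j else - j)) mod int n, (s + t) mod 2)"
  by (simp add: dihedral_group_def)

lemma dihedral_group_left_inverse:
  assumes "n > 0" and "(i, s) \<in> carrier (dihedral_group n)"
  defines "y \<equiv> if s = 0 then ((- i) mod int n, 0) else (i, 1)"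
  shows "y \<in> carrier (dihedral_group n)" and "y \<otimes>\<^bsub>dihedral_group n\<^esub> (i, s) = \<one>\<^bsub>dihedral_group n\<^esub>"
  using assms by (auto simp: carrier_dihedral_group mod_simps)

lemma group_dihedral_group:
  assumes "n > 0"
  shows "group (dihedral_group n)"
proof (rule groupI)
  fix x y z
  assume "x \<in> carrier (dihedral_group n)" "y \<in> carrier (dihedral_group n)" "z \<in> carrier (dihedral_group n)"
  then obtain i s j t k u where "x = (i, s)" "y = (j, t)" "z = (k, u)"
    and "s \<in> {0, 1}" "t \<in> {0, 1}" "u \<in> {0, 1}"
    by (auto simp: carrier_dihedral_group)
  then show "x \<otimes>\<^bsub>dihedral_group n\<^esub> y \<otimes>\<^bsub>dihedral_group n\<^esub> z =
      x \<otimes>\<^bsub>dihedral_group n\<^esub> (y \<otimes>\<^bsub>dihedral_group n\<^esub> z)"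
    by (elim insertE emptyE; simp add: mod_simps mod_diff_add_left_eq mod_diff_add_right_eq;
        simp add: algebra_simps)
next
  fix x
  assume "x \<in> carrier (dihedral_group n)"
  then show "\<exists>y \<in> carrier (dihedral_group n). y \<otimes>\<^bsub>dihedral_group n\<^esub> x = \<one>\<^bsub>dihedral_group n\<^esub>"
    using dihedral_group_left_inverse[OF assms] by (cases x) blast
qed (use assms in \<open>auto simp: carrier_dihedral_group\<close>)

lemma inv_dihedral_group:
  assumes "n > 0" and "(i, s) \<in> carrier (dihedral_group n)"
  shows "inv\<^bsub>dihedral_group n\<^esub> (i, s) = (if s = 0 then ((- i) mod int n, 0) else (i, 1))"
  using group.inv_equality[OF group_dihedral_group] dihedral_group_left_inverse assms by blast

lemma carrier_dicyclic_group: "carrier (dicyclic_group n) = {0..<2 * int n} \<times> {0, 1}"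
  by (auto simp: dicyclic_group_def)

lemma one_dicyclic_group [simp]: "\<one>\<^bsub>dicyclic_group n\<^esub> = (0, 0)"
  by (simp add: dicyclic_group_def)

lemma mult_dicyclic_group [simp]:
  "(i, s) \<otimes>\<^bsub>dicyclic_group n\<^esub> (j, t) =
     ((i + (if s = 0 then j else - j) + (if s = 1 \<and> t = 1 then int n else 0)) mod (2 * int n),
      (s + t) mod 2)"
  by (simp add: dicyclic_group_def)

lemma dicyclic_group_left_inverse:
  assumes "n > 0" and "(i, s) \<in> carrier (dicyclic_group n)"
  defines "y \<equiv> if s = 0 then ((- i) mod (2 * int n), 0) else ((i + int n) mod (2 * int n), 1)"
  shows "y \<in> carrier (dicyclic_group n)" and "y \<otimes>\<^bsub>dicyclic_group n\<^esub> (i, s) = \<one>\<^bsub>dicyclic_group n\<^esub>"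
  using assms by (auto simp: carrier_dicyclic_group mod_simps mod_diff_add_left_eq)

lemma group_dicyclic_group:
  assumes "n > 0"
  shows "group (dicyclic_group n)"
proof (rule groupI)
  fix x y z
  assume "x \<in> carrier (dicyclic_group n)" "y \<in> carrier (dicyclic_group n)" "z \<in> carrier (dicyclic_group n)"
  then obtain i s j t k u where "x = (i, s)" "y = (j, t)" "z = (k, u)"
    and "s \<in> {0, 1}" "t \<in> {0, 1}" "u \<in> {0, 1}"
    by (auto simp: carrier_dicyclic_group)
  moreover have "(i + k - j + int n) mod (2 * int n) = (i + k - j - int n) mod (2 * int n)"
  proof -
    have "i + k - j + int n = (i + k - j - int n) + 2 * int n" by simp
    then show ?thesis by (simp only: mod_add_self2)
  qed
  ultimately show "x \<otimes>\<^bsub>dicyclic_group n\<^esub> y \<otimes>\<^bsub>dicyclic_group n\<^esub> z =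
      x \<otimes>\<^bsub>dicyclic_group n\<^esub> (y \<otimes>\<^bsub>dicyclic_group n\<^esub> z)"
    by (elim insertE emptyE; simp add: mod_simps mod_diff_add_left_eq mod_diff_add_right_eq;
        simp add: algebra_simps)
next
  fix x
  assume "x \<in> carrier (dicyclic_group n)"
  then show "\<exists>y \<in> carrier (dicyclic_group n). y \<otimes>\<^bsub>dicyclic_group n\<^esub> x = \<one>\<^bsub>dicyclic_group n\<^esub>"
    using dicyclic_group_left_inverse[OF assms] by (cases x) blast
qed (use assms in \<open>auto simp: carrier_dicyclic_group\<close>)

lemma inv_dicyclic_group:
  assumes "n > 0" and "(i, s) \<in> carrier (dicyclic_group n)"
  shows "inv\<^bsub>dicyclic_group n\<^esub> (i, s) =
    (if s = 0 then ((- i) mod (2 * int n), 0) else ((i + int n) mod (2 * int n), 1))"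
  using group.inv_equality[OF group_dicyclic_group] dicyclic_group_left_inverse assms by blast

lemma carrier_integer_mod_group_eq_list:
  "n > 0 \<Longrightarrow> carrier (integer_mod_group n) = set [0..int n - 1]"
  by (auto simp: carrier_integer_mod_group)

lemma carrier_dihedral_group_eq_list:
  "carrier (dihedral_group n) = set (List.product [0..int n - 1] [0, 1])"
  by (auto simp: carrier_dihedral_group)

lemma carrier_dicyclic_group_eq_list:
  "carrier (dicyclic_group n) = set (List.product [0..2 * int n - 1] [0, 1])"
  by (auto simp: carrier_dicyclic_group)

(* The simplifier evaluates products far faster with this applied form than with the library's
   unapplied simp rule, which leaves a symbolic lambda to be re-simplified for every product. *)
lemma mult_integer_mod_group_applied [simp]: "x \<otimes>\<^bsub>integer_mod_group n\<^esub> y = (x + y) mod int n"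
  by simp

declare mult_integer_mod_group [simp del]

(* b is the outer index so that inv b is simplified once per b rather than once per pair. *)
definition difference_list :: "('a, 'b) monoid_scheme \<Rightarrow> 'a list \<Rightarrow> 'a list" where
  "difference_list G xs = concat (map (\<lambda>b. map (\<lambda>a. a \<otimes>\<^bsub>G\<^esub> inv\<^bsub>G\<^esub> b) (removeAll b xs)) xs)"

lemma diff_mset_set_eq_mset_difference_list:
  assumes "distinct xs"
  shows "diff_mset G (set xs) = mset (difference_list G xs)"
proof -
  define pairs where "pairs = map prod.swap [(b, a) \<leftarrow> List.product xs xs. b \<noteq> a]"
  have as_map: "difference_list G xs = map (\<lambda>(a, b). a \<otimes>\<^bsub>G\<^esub> inv\<^bsub>G\<^esub> b) pairs"
    by (simp add: pairs_def difference_list_def product_concat_map filter_concat map_concat filter_map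
        removeAll_filter_not_eq o_def)
  have "{(a, b). a \<in> set xs \<and> b \<in> set xs \<and> a \<noteq> b} = set pairs"
    by (auto simp: pairs_def)
  moreover have "distinct pairs"
    using assms by (simp add: pairs_def distinct_map distinct_product)
  ultimately show ?thesis
    unfolding diff_mset_def as_map mset_map by (simp only: mset_set_set)
qed

lemma diff_mset_family_map_set:
  "\<forall>xs \<in> set xss. distinct xs \<Longrightarrow>
     diff_mset_family G (map set xss) = mset (concat (map (difference_list G) xss))"
  by (induction xss) (simp_all add: diff_mset_family_def diff_mset_set_eq_mset_difference_list)

lemma distinct_and_set_eq_if_count_list_eq_1:
  assumes "\<forall>a \<in> A. count_list xs a = 1" and "set xs \<subseteq> A"
  shows "distinct xs" and "set xs = A"
proof -
  show "distinct xs"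
    using assms by (simp add: distinct_count_atmost_1 count_mset subset_iff)
  show "set xs = A"
    using assms by (metis count_notin subsetI subset_antisym zero_neq_one)
qed

lemma disjoint_nth_if_distinct_concat:
  "distinct (concat xss) \<Longrightarrow> i < length xss \<Longrightarrow> j < length xss \<Longrightarrow> i \<noteq> j \<Longrightarrow>
     set (xss ! i) \<inter> set (xss ! j) = {}"
proof (induction xss arbitrary: i j)
  case (Cons xs xss)
  have "set xs \<inter> set (xss ! k) = {}" if "k < length xss" for k
    using Cons.prems(1) nth_mem[OF that] by auto
  with Cons show ?case
    by (cases i; cases j) auto
qed simp

lemma is_Hadamard_PDF_if_count_list:
  assumes partition: "\<forall>g \<in> carrier G. count_list (concat Bs) g = 1" "set (concat Bs) \<subseteq> carrier G"
    and differences: "\<forall>g \<in> carrier G - {\<one>\<^bsub>G\<^esub>}. count_list (concat (map (difference_list G) Bs)) g = lam"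
    and sizes: "map length Bs = ks"
    and order: "card (carrier G) = 2 * lam"
  shows "is_Hadamard_PDF G (map set Bs) ks lam"
proof -
  have distinct: "distinct (concat Bs)" and cover: "set (concat Bs) = carrier G"
    using distinct_and_set_eq_if_count_list_eq_1[OF partition] by auto
  have distinct_blocks: "distinct B" if "B \<in> set Bs" for B
    using distinct that by (simp add: distinct_concat_iff)
  have "card (set (Bs ! i)) = ks ! i" if "i < length Bs" for i
    using that sizes distinct_blocks[OF nth_mem[OF that]] by (auto simp: distinct_card)
  moreover have "set (Bs ! i) \<inter> set (Bs ! j) = {}" if "i < length Bs" "j < length Bs" "i \<noteq> j" for i j
    using disjoint_nth_if_distinct_concat[OF distinct that] .
  moreover have "diff_mset_family G (map set Bs) = mset (concat (map (difference_list G) Bs))"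
    using distinct_blocks by (simp add: diff_mset_family_map_set)
  ultimately show ?thesis
    using differences sizes order cover
    by (auto simp: is_Hadamard_PDF_def is_PDF_def count_mset)
qed

definition count_table :: "'a list \<Rightarrow> 'b list \<Rightarrow> ('a \<times> 'b) list \<Rightarrow> nat list list" where
  "count_table xs ys zs = map (\<lambda>x. map (\<lambda>y. count_list zs (x, y)) ys) xs"

lemma count_table_eq_iff:
  "count_table xs ys zs = map (\<lambda>x. map (\<lambda>y. f (x, y)) ys) xs \<longleftrightarrow>
     (\<forall>z \<in> set xs \<times> set ys. count_list zs z = f z)"
  by (auto simp: count_table_def)

fun incr_entry :: "'a list \<Rightarrow> 'a \<Rightarrow> nat list \<Rightarrow> nat list" where
  "incr_entry (x # xs) a (k # ks) = (if x = a then Suc k # ks else k # incr_entry xs a ks)"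
| "incr_entry _ _ ks = ks"

fun incr_table_entry :: "'a list \<Rightarrow> 'b list \<Rightarrow> 'a \<times> 'b \<Rightarrow> nat list list \<Rightarrow> nat list list" where
  "incr_table_entry (x # xs) ys (a, b) (r # rs) =
     (if x = a then incr_entry ys b r # rs else r # incr_table_entry xs ys (a, b) rs)"
| "incr_table_entry _ _ _ rs = rs"

lemma incr_entry_map:
  "distinct xs \<Longrightarrow> incr_entry xs a (map f xs) = map (f(a := Suc (f a))) xs"
  by (induction xs) auto

lemma count_table_Cons:
  assumes "distinct xs" and "distinct ys"
  shows "count_table xs ys (z # zs) = incr_table_entry xs ys z (count_table xs ys zs)"
proof (cases z)
  case (Pair a b)
  have "incr_table_entry xs' ys (a, b) (count_table xs' ys zs) = count_table xs' ys ((a, b) # zs)"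
    if "distinct xs'" for xs'
    using that by (induction xs') (auto simp: count_table_def incr_entry_map[OF assms(2)] intro: map_cong)
  then show ?thesis
    using Pair assms(1) by simp
qed

lemma count_table_eq_foldr:
  assumes "distinct xs" and "distinct ys"
  shows "count_table xs ys zs = foldr (incr_table_entry xs ys) zs (map (\<lambda>_. map (\<lambda>_. 0) ys) xs)"
proof (induction zs)
  case Nil
  show ?case by (simp add: count_table_def)
next
  case (Cons z zs)
  then show ?case by (simp add: count_table_Cons[OF assms])
qed

lemma is_Hadamard_PDF_by_count_tables:
  assumes carrier: "carrier G = set xs \<times> set ys"
    and distinct: "distinct xs" "distinct ys"
    and blocks: "set (concat Bs) \<subseteq> carrier G"
    and partition: "count_table xs ys (concat Bs) = map (\<lambda>x. map (\<lambda>y. 1) ys) xs"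
    and differences: "count_table xs ys (concat (map (difference_list G) Bs)) =
      map (\<lambda>x. map (\<lambda>y. if (x, y) = \<one>\<^bsub>G\<^esub> then 0 else lam) ys) xs"
    and sizes: "map length Bs = ks"
    and order: "length xs * length ys = 2 * lam"
  shows "is_Hadamard_PDF G (map set Bs) ks lam"
proof (rule is_Hadamard_PDF_if_count_list[OF _ blocks _ sizes])
  show "\<forall>g \<in> carrier G. count_list (concat Bs) g = 1"
    using partition unfolding count_table_eq_iff[where f = "\<lambda>_. 1"] carrier .
  show "\<forall>g \<in> carrier G - {\<one>\<^bsub>G\<^esub>}. count_list (concat (map (difference_list G) Bs)) g = lam"
    using differences unfolding count_table_eq_iff[where f = "\<lambda>z. if z = \<one>\<^bsub>G\<^esub> then 0 else lam"] carrier
    by (auto split: if_split_asm)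
  show "card (carrier G) = 2 * lam"
    using carrier distinct order by (simp add: card_cartesian_product distinct_card)
qed

lemmas group_eval_simps =
  upto.simps carrier_integer_mod_group_eq_list carrier_dihedral_group_eq_list carrier_dicyclic_group_eq_list
  group_dihedral_group group_dicyclic_group inv_dihedral_group inv_dicyclic_group

lemma Hadamard_PDF_Z6_x_Z6:
  "is_Hadamard_PDF (integer_mod_group 6 \<times>\<times> integer_mod_group 6)
     (map set
       [[(1, 0), (3, 4), (5, 2)],
        [(0, 1), (1, 3), (2, 0), (2, 1), (2, 2), (2, 4), (3, 5), (4, 1), (5, 1)],
        [(0, 0), (0, 2), (0, 3), (0, 4), (0, 5), (1, 1), (1, 2), (1, 4), (1, 5), (2, 3),
         (2, 5), (3, 0), (3, 1), (3, 2), (3, 3), (4, 0), (4, 2), (4, 3), (4, 4), (4, 5),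
         (5, 0), (5, 3), (5, 4), (5, 5)]])
     [3, 9, 24] 18"
  by (rule is_Hadamard_PDF_by_count_tables[where xs = "[0..5]" and ys = "[0..5]"])
    (simp_all add: group_eval_simps count_table_eq_foldr difference_list_def)

lemma Hadamard_PDF_Z3_x_Z12:
  "is_Hadamard_PDF (integer_mod_group 3 \<times>\<times> integer_mod_group 12)
     (map set
       [[(0, 2), (1, 6), (2, 10)],
        [(0, 3), (0, 4), (0, 5), (0, 7), (0, 11), (1, 0), (1, 5), (2, 5), (2, 8)],
        [(0, 0), (0, 1), (0, 6), (0, 8), (0, 9), (0, 10), (1, 1), (1, 2), (1, 3), (1, 4),
         (1, 7), (1, 8), (1, 9), (1, 10), (1, 11), (2, 0), (2, 1), (2, 2), (2, 3), (2, 4),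
         (2, 6), (2, 7), (2, 9), (2, 11)]])
     [3, 9, 24] 18"
  by (rule is_Hadamard_PDF_by_count_tables[where xs = "[0..2]" and ys = "[0..11]"])
    (simp_all add: group_eval_simps count_table_eq_foldr difference_list_def)

lemma Hadamard_PDF_Z3_x_Q12:
  "is_Hadamard_PDF (integer_mod_group 3 \<times>\<times> dicyclic_group 3)
     (map set
       [[(0, (2, 0)), (1, (0, 0)), (2, (4, 0))],
        [(0, (1, 0)), (0, (1, 1)), (1, (0, 1)), (1, (1, 1)), (1, (2, 1)), (1, (3, 0)),
         (1, (4, 1)), (2, (1, 1)), (2, (5, 0))],
        [(0, (0, 0)), (0, (0, 1)), (0, (2, 1)), (0, (3, 0)), (0, (3, 1)), (0, (4, 0)),
         (0, (4, 1)), (0, (5, 0)), (0, (5, 1)), (1, (1, 0)), (1, (2, 0)), (1, (3, 1)),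
         (1, (4, 0)), (1, (5, 0)), (1, (5, 1)), (2, (0, 0)), (2, (0, 1)), (2, (1, 0)),
         (2, (2, 0)), (2, (2, 1)), (2, (3, 0)), (2, (3, 1)), (2, (4, 1)), (2, (5, 1))]])
     [3, 9, 24] 18"
  by (rule is_Hadamard_PDF_by_count_tables[where xs = "[0..2]" and ys = "List.product [0..5] [0, 1]"])
    (simp_all add: group_eval_simps count_table_eq_foldr difference_list_def)

lemma Hadamard_PDF_D6_x_D6:
  "is_Hadamard_PDF (dihedral_group 3 \<times>\<times> dihedral_group 3)
     (map set
       [[((0, 0), (0, 0)), ((1, 0), (0, 0)), ((2, 0), (0, 0))],
        [((0, 0), (2, 1)), ((0, 1), (0, 1)), ((0, 1), (1, 0)), ((0, 1), (1, 1)),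
         ((0, 1), (2, 1)), ((1, 0), (0, 1)), ((1, 1), (0, 0)), ((2, 0), (1, 1)),
         ((2, 1), (2, 0))],
        [((0, 0), (0, 1)), ((0, 0), (1, 0)), ((0, 0), (1, 1)), ((0, 0), (2, 0)),
         ((0, 1), (0, 0)), ((0, 1), (2, 0)), ((1, 0), (1, 0)), ((1, 0), (1, 1)),
         ((1, 0), (2, 0)), ((1, 0), (2, 1)), ((1, 1), (0, 1)), ((1, 1), (1, 0)),
         ((1, 1), (1, 1)), ((1, 1), (2, 0)), ((1, 1), (2, 1)), ((2, 0), (0, 1)),
         ((2, 0), (1, 0)), ((2, 0), (2, 0)), ((2, 0), (2, 1)), ((2, 1), (0, 0)),
         ((2, 1), (0, 1)), ((2, 1), (1, 0)), ((2, 1), (1, 1)), ((2, 1), (2, 1))]])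
     [3, 9, 24] 18"
  by (rule is_Hadamard_PDF_by_count_tables
      [where xs = "List.product [0..2] [0, 1]" and ys = "List.product [0..2] [0, 1]"])
    (simp_all add: group_eval_simps count_table_eq_foldr difference_list_def)

lemma Hadamard_PDF_Z6_x_D6:
  "is_Hadamard_PDF (integer_mod_group 6 \<times>\<times> dihedral_group 3)
     (map set
       [[(1, (1, 1)), (3, (2, 1)), (5, (0, 1))],
        [(0, (0, 0)), (0, (1, 1)), (1, (0, 0)), (1, (1, 0)), (1, (2, 0)), (2, (0, 0)),
         (2, (0, 1)), (4, (0, 0)), (4, (2, 1))],
        [(0, (0, 1)), (0, (1, 0)), (0, (2, 0)), (0, (2, 1)), (1, (0, 1)), (1, (2, 1)),
         (2, (1, 0)), (2, (1, 1)), (2, (2, 0)), (2, (2, 1)), (3, (0, 0)), (3, (0, 1)),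
         (3, (1, 0)), (3, (1, 1)), (3, (2, 0)), (4, (0, 1)), (4, (1, 0)), (4, (1, 1)),
         (4, (2, 0)), (5, (0, 0)), (5, (1, 0)), (5, (1, 1)), (5, (2, 0)), (5, (2, 1))]])
     [3, 9, 24] 18"
  by (rule is_Hadamard_PDF_by_count_tables
      [where xs = "[0..5]" and ys = "List.product [0..2] [0, 1]"])
    (simp_all add: group_eval_simps count_table_eq_foldr difference_list_def)

theorem mainTheorem11:
  shows "(\<exists>Bs. is_Hadamard_PDF (integer_mod_group 6 \<times>\<times> integer_mod_group 6) Bs [3, 9, 24] 18)
       \<and> (\<exists>Bs. is_Hadamard_PDF (integer_mod_group 3 \<times>\<times> integer_mod_group 12) Bs [3, 9, 24] 18)
       \<and> (\<exists>Bs. is_Hadamard_PDF (integer_mod_group 3 \<times>\<times> dicyclic_group 3) Bs [3, 9, 24] 18)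
       \<and> (\<exists>Bs. is_Hadamard_PDF (dihedral_group 3 \<times>\<times> dihedral_group 3) Bs [3, 9, 24] 18)
       \<and> (\<exists>Bs. is_Hadamard_PDF (integer_mod_group 6 \<times>\<times> dihedral_group 3) Bs [3, 9, 24] 18)"
  using Hadamard_PDF_Z6_x_Z6 Hadamard_PDF_Z3_x_Z12 Hadamard_PDF_Z3_x_Q12 Hadamard_PDF_D6_x_D6
    Hadamard_PDF_Z6_x_D6
  by blast

end
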